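(* Let $L\in\mathbb Z^+$ and let $\mathcal C$ be a linear $[n,k]$ MDS code over $F$ with $k<n$, which is $(\tau,L)$-list decodable for some $\tau\in\mathbb Z_{\ge0}$. Then $\tau\le\frac{L(n-k)}{L+1}$ in each of the following cases: (a) $k\ge L$; (b) $k\ge2$ and $n\ge(L+1)h+k$, where $h$ is the smallest nonnegative integer with $\binom{k+h}{k-1}\ge L$; (c) $k\ge2$ and $n-k\equiv 0,\ L-1,$ or $L\pmod{L+1}$; (d) $n-k-1\le L\le\binom{n-1}{k-1}$.
   Context: $F=\mathrm{GF}(q)$. For $L\in\mathbb Z^+$ and $\tau\in\mathbb Z_{\ge0}$, a code $\mathcal C\subseteq F^n$ is $(\tau,L)$-list decodable if for every $y\in F^n$ at most $L$ codewords of $\mathcal C$ lie at Hamming distance at most $\tau$ from $y$. *)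

theory Defs
  imports "HOL-Analysis.Analysis"
begin

text \<open>Vectors of F^n are represented as 'a ^ 'n with n = CARD('n).
  Hamming distance: number of coordinates where x and y differ.\<close>
definition hamming_dist :: "'a ^ 'n \<Rightarrow> 'a ^ 'n \<Rightarrow> nat" where
  "hamming_dist x y = card {i. x $ i \<noteq> y $ i}"

definition linear_code :: "('a::field ^ 'n) set \<Rightarrow> nat \<Rightarrow> bool" where
  "linear_code C k \<longleftrightarrow> vec.subspace C \<and> vec.dim C = k"

text \<open>MDS: minimum distance n - k + 1 (distinct codewords differ in at least n-k+1 places;
  the reverse inequality is the Singleton bound).\<close>
definition mds_code :: "('a::field ^ 'n) set \<Rightarrow> nat \<Rightarrow> bool" where
  "mds_code C k \<longleftrightarrow> linear_code C k \<and>
     (\<forall>x\<in>C. \<forall>y\<in>C. x \<noteq> y \<longrightarrow> CARD('n) - k + 1 \<le> hamming_dist x y)"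

definition list_decodable :: "('a ^ 'n) set \<Rightarrow> nat \<Rightarrow> nat \<Rightarrow> bool" where
  "list_decodable C \<tau> L \<longleftrightarrow> (\<forall>y. card {c\<in>C. hamming_dist c y \<le> \<tau>} \<le> L)"

end

theory Submission
  imports Defs
begin

text \<open>Write \<open>D = n - k\<close> and suppose \<open>\<tau> \<ge> t = \<lfloor>L D / (L + 1)\<rfloor> + 1\<close>; put \<open>s = D - t\<close>, so that
  \<open>L s + 1 \<le> t\<close>. Split the coordinates into a set \<open>Z\<close>, one coordinate \<open>x\<close> and \<open>L\<close> blocks of
  length \<open>s\<close>. For each of \<open>L\<close> distinct \<open>(k - 1)\<close>-subsets \<open>A\<close> of \<open>Z\<close> the MDS property yields a
  codeword whose zero set is exactly \<open>A\<close>, normalised to \<open>1\<close> at \<open>x\<close>. The word that copies the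
  \<open>i\<close>-th of these codewords on the \<open>i\<close>-th block, is \<open>1\<close> at \<open>x\<close> and \<open>0\<close> on \<open>Z\<close> lies within distance
  \<open>n - k - s = t\<close> of each of them and within \<open>L s + 1 \<le> t\<close> of \<open>0\<close>: \<open>L + 1\<close> codewords in one ball.
  This needs \<open>L\<close> distinct \<open>(k - 1)\<close>-subsets of \<open>Z\<close>, i.e. \<open>L \<le> |Z| choose (k - 1)\<close>, and each of the four
  hypotheses guarantees it.\<close>

lemma subspace_nonzero_vanishing_on:
  fixes C :: "('a::field ^ 'n) set"
  assumes "vec.subspace C" and "card A < vec.dim C"
  shows "\<exists>w\<in>C. w \<noteq> 0 \<and> (\<forall>j\<in>A. w $ j = 0)"
proof (rule ccontr)
  assume no_vanishing: "\<not> ?thesis"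
  define restr :: "'a ^ 'n \<Rightarrow> 'a ^ 'n" where "restr x = (\<chi> j. if j \<in> A then x $ j else 0)" for x
  have lin: "Vector_Spaces.linear (*s) (*s) restr"
    by (auto simp: restr_def Vector_Spaces.linear_iff vec.vector_space_axioms vec_eq_iff)
  have span: "vec.span C = C" using assms(1) by (simp add: vec.span_eq_iff)
  have "inj_on restr (vec.span C)"
  proof (rule inj_onI)
    fix u v assume "u \<in> vec.span C" "v \<in> vec.span C" and eq: "restr u = restr v"
    then have "u - v \<in> C" using assms(1) span by (simp add: vec.subspace_diff)
    moreover have "(u - v) $ j = 0" if "j \<in> A" for j
      using arg_cong[OF eq, of "\<lambda>x. x $ j"] that by (simp add: restr_def)
    ultimately show "u = v" using no_vanishing by auto
  qed
  then have "vec.dim C = vec.dim (restr ` C)" by (simp add: vec.dim_image_eq[OF lin])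
  also have "\<dots> \<le> vec.dim {x::'a ^ 'n. \<forall>i. i \<notin> A \<longrightarrow> x $ i = 0}"
    by (rule vec.dim_subset) (auto simp: restr_def)
  also have "\<dots> = card A" by (rule dim_substandard_cart)
  finally show False using assms(2) by simp
qed

lemma hamming_dist_le_card_agree:
  fixes x y :: "'a ^ 'n"
  assumes "\<forall>i\<in>A. x $ i = y $ i"
  shows "hamming_dist x y \<le> CARD('n) - card A"
proof -
  have "hamming_dist x y \<le> card (UNIV - A)"
    unfolding hamming_dist_def using assms by (intro card_mono) auto
  then show ?thesis by (simp add: card_Diff_subset)
qed

lemma mds_code_card_zeros:
  fixes C :: "('a::field ^ 'n) set"
  assumes "mds_code C k" and "w \<in> C" and "w \<noteq> 0"
  shows "card {i. w $ i = 0} \<le> k - 1"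
proof -
  have "0 \<in> C" using assms(1) by (simp add: mds_code_def linear_code_def vec.subspace_0)
  then have "CARD('n) - k + 1 \<le> hamming_dist w 0"
    using assms unfolding mds_code_def by blast
  also have "\<dots> = CARD('n) - card {i. w $ i = 0}"
    unfolding hamming_dist_def using card_Diff_subset[of "{i. w $ i = 0}" UNIV]
    by (simp add: set_diff_eq)
  finally show ?thesis by linarith
qed

lemma mds_code_zero_set_eq:
  fixes C :: "('a::field ^ 'n) set"
  assumes "mds_code C k" and "w \<in> C" and "w \<noteq> 0"
    and "card A = k - 1" and "\<forall>j\<in>A. w $ j = 0"
  shows "{j. w $ j = 0} = A"
proof -
  have "A \<subseteq> {j. w $ j = 0}" using assms(5) by blast
  moreover have "card {j. w $ j = 0} \<le> card A"
    using mds_code_card_zeros[OF assms(1-3)] assms(4) by simp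
  ultimately show ?thesis by (intro card_seteq[symmetric]) auto
qed

lemma mds_codeword_with_zero_set:
  fixes C :: "('a::field ^ 'n) set"
  assumes mds: "mds_code C k" and "k \<ge> 1" and "card A = k - 1" and "x \<notin> A"
  obtains c where "c \<in> C" "{j. c $ j = 0} = A" "c $ x = 1"
proof -
  have sub: "vec.subspace C" and "vec.dim C = k"
    using mds by (auto simp: mds_code_def linear_code_def)
  then obtain w where w: "w \<in> C" "w \<noteq> 0" "\<forall>j\<in>A. w $ j = 0"
    using subspace_nonzero_vanishing_on[of C A] assms(2,3) by auto
  have zeros: "{j. w $ j = 0} = A" by (rule mds_code_zero_set_eq[OF mds w(1,2) assms(3) w(3)])
  then have "w $ x \<noteq> 0" using assms(4) by blast
  then show ?thesis
    using that[of "(1 / w $ x) *s w"] zeros w(1) sub by (simp add: vec.subspace_scale)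
qed

lemma exists_equal_fibres:
  fixes W :: "'a set" and I :: "'b set"
  assumes "finite I" and "finite W" and "card W = card I * s"
  shows "\<exists>p. p ` W \<subseteq> I \<and> (\<forall>i\<in>I. card {j\<in>W. p j = i} = s)"
  using assms
proof (induction I arbitrary: W rule: finite_induct)
  case empty
  then show ?case by auto
next
  case (insert a I)
  have "s \<le> card W" using insert.hyps insert.prems(2) by simp
  then obtain B where B: "B \<subseteq> W" "card B = s" "finite B"
    by (rule obtain_subset_with_card_n)
  then have "card (W - B) = card I * s"
    using insert.hyps insert.prems by (simp add: card_Diff_subset)
  then obtain p where p: "p ` (W - B) \<subseteq> I" "\<forall>i\<in>I. card {j\<in>W - B. p j = i} = s"
    using insert.IH insert.prems(1) by blast
  define p' where "p' j = (if j \<in> B then a else p j)" for j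
  have "p' ` W \<subseteq> insert a I" using p(1) by (auto simp: p'_def)
  moreover have "card {j\<in>W. p' j = a} = s"
  proof -
    have "{j\<in>W. p' j = a} = B" using B(1) p(1) insert.hyps(2) by (auto simp: p'_def)
    then show ?thesis using B(2) by simp
  qed
  moreover have "card {j\<in>W. p' j = i} = s" if "i \<in> I" for i
  proof -
    have "{j\<in>W. p' j = i} = {j\<in>W - B. p j = i}" using that insert.hyps(2) by (auto simp: p'_def)
    then show ?thesis using p(2) that by simp
  qed
  ultimately show ?case by blast
qed

lemma list_decodable_mono:
  fixes C :: "('a::finite ^ 'n) set"
  assumes "list_decodable C \<tau> L" and "\<tau>' \<le> \<tau>"
  shows "list_decodable C \<tau>' L"
  unfolding list_decodable_def
proof
  fix y
  have "card {c\<in>C. hamming_dist c y \<le> \<tau>'} \<le> card {c\<in>C. hamming_dist c y \<le> \<tau>}"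
    using assms(2) by (intro card_mono) auto
  also have "\<dots> \<le> L" using assms(1) by (simp add: list_decodable_def)
  finally show "card {c\<in>C. hamming_dist c y \<le> \<tau>'} \<le> L" .
qed

lemma mds_code_not_list_decodable:
  fixes C :: "('a::{finite,field} ^ 'n) set" and Z :: "'n set"
  assumes mds: "mds_code C k" and "k \<ge> 1"
    and "L \<le> card Z choose (k - 1)" and "x \<notin> Z"
    and W: "card (UNIV - Z - {x}) = L * s"
    and "CARD('n) - k - s \<le> t" and "L * s + 1 \<le> t"
  shows "\<not> list_decodable C t L"
proof -
  define W where "W = UNIV - Z - {x}"
  have "card {A. A \<subseteq> Z \<and> card A = k - 1} = card Z choose (k - 1)"
    by (rule n_subsets) simp
  then obtain \<A> where \<A>: "\<A> \<subseteq> {A. A \<subseteq> Z \<and> card A = k - 1}" "card \<A> = L"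
    using obtain_subset_with_card_n[of L "{A. A \<subseteq> Z \<and> card A = k - 1}"] assms(3) by auto
  have "\<forall>A\<in>\<A>. \<exists>c. c \<in> C \<and> {j. c $ j = 0} = A \<and> c $ x = 1"
    using mds_codeword_with_zero_set[OF mds assms(2)] \<A>(1) assms(4) by blast
  then obtain c where c: "\<And>A. A \<in> \<A> \<Longrightarrow> c A \<in> C \<and> {j. c A $ j = 0} = A \<and> c A $ x = 1"
    by metis
  obtain p where p: "p ` W \<subseteq> \<A>" "\<And>A. A \<in> \<A> \<Longrightarrow> card {j\<in>W. p j = A} = s"
    using exists_equal_fibres[of \<A> W s] \<A>(2) W finite_subset[OF \<A>(1)]
    by (auto simp: W_def)
  define y where "y = (\<chi> j. if j \<in> W then c (p j) $ j else if j = x then 1 else 0)"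
  have near_c: "hamming_dist (c A) y \<le> t" if "A \<in> \<A>" for A
  proof -
    let ?agree = "A \<union> {x} \<union> {j\<in>W. p j = A}"
    have "\<forall>j\<in>?agree. c A $ j = y $ j"
      using c[OF that] \<A>(1) that by (auto simp: y_def W_def)
    then have "hamming_dist (c A) y \<le> CARD('n) - card ?agree"
      by (rule hamming_dist_le_card_agree)
    moreover have "card ?agree = (k - 1) + 1 + s"
    proof -
      have A: "A \<subseteq> Z" "card A = k - 1" using \<A>(1) that by auto
      moreover have "x \<notin> A" using A(1) assms(4) by blast
      ultimately have "card (A \<union> {x}) = k - 1 + 1" by simp
      moreover have "card ?agree = card (A \<union> {x}) + card {j\<in>W. p j = A}"
        by (rule card_Un_disjoint) (use A(1) in \<open>auto simp: W_def\<close>)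
      ultimately show ?thesis using p(2)[OF that] by simp
    qed
    ultimately show ?thesis using assms(6) by linarith
  qed
  have near_0: "hamming_dist 0 y \<le> t"
  proof -
    have "hamming_dist 0 y \<le> card (W \<union> {x})"
      unfolding hamming_dist_def by (intro card_mono) (auto simp: y_def)
    also have "\<dots> = card W + 1" using card_insert_disjoint[of W x] by (simp add: W_def)
    also have "\<dots> = L * s + 1" using W by (simp add: W_def)
    finally show ?thesis using assms(7) by linarith
  qed
  have "inj_on c \<A>"
    by (rule inj_on_inverseI[where g = "\<lambda>w. {j. w $ j = 0}"]) (use c in blast)
  moreover have "0 \<notin> c ` \<A>" using c by force
  ultimately have "card (insert 0 (c ` \<A>)) = L + 1"
    using \<A>(2) finite_subset[OF \<A>(1)] by (simp add: card_image)
  moreover have "insert 0 (c ` \<A>) \<subseteq> {w\<in>C. hamming_dist w y \<le> t}"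
    using c near_c near_0 mds by (auto simp: mds_code_def linear_code_def vec.subspace_0)
  ultimately have "L + 1 \<le> card {w\<in>C. hamming_dist w y \<le> t}"
    by (metis (no_types, lifting) card_mono finite)
  then show ?thesis unfolding list_decodable_def by (metis not_less_eq_eq Suc_eq_plus1)
qed

lemma list_radius_blocks:
  fixes L D :: nat
  assumes "D \<ge> 1"
  defines "t \<equiv> L * D div (L + 1) + 1"
  shows "t \<le> D" and "L * (D - t) + 1 \<le> t"
proof -
  have "L * D div (L + 1) < D" using assms(1) by (simp add: div_less_iff_less_mult)
  then show "t \<le> D" by (simp add: t_def)
  have "L * D = (L + 1) * (L * D div (L + 1)) + L * D mod (L + 1)"
    by (rule mult_div_mod_eq[symmetric])
  moreover have "(L + 1) * t = (L + 1) * (L * D div (L + 1)) + (L + 1)" by (simp add: t_def)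
  moreover have "L * D mod (L + 1) < L + 1" by simp
  ultimately have "L * D < (L + 1) * t" by linarith
  moreover have "L * (D - t) = L * D - L * t" by (rule diff_mult_distrib2)
  moreover have "L * t \<le> L * D" using \<open>t \<le> D\<close> by simp
  moreover have "(L + 1) * t = L * t + t" by simp
  ultimately show "L * (D - t) + 1 \<le> t" by linarith
qed

lemma list_radius_support:
  fixes L D :: nat
  assumes "L \<ge> 1" and "D \<ge> 1"
  defines "t \<equiv> L * D div (L + 1) + 1"
  shows "D - L * (D - t) = D div (L + 1) + (if D mod (L + 1) = 0 then L else D mod (L + 1))"
proof -
  define m r where "m = D div (L + 1)" and "r = D mod (L + 1)"
  have D: "D = (L + 1) * m + r" unfolding m_def r_def by (rule mult_div_mod_eq[symmetric])
  have "r < L + 1" by (simp add: r_def)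
  show ?thesis
  proof (cases "r = 0")
    case True
    then obtain m' where m': "m = Suc m'" using D assms(2) by (cases m) auto
    have "L * D = (L + 1) * (L * m)" using D True by (simp add: algebra_simps)
    then have "L * D div (L + 1) = L * m" by (simp only: nonzero_mult_div_cancel_left[of "L + 1"])
    then have "D - L * (D - t) = m + L" using D True m' by (simp add: t_def algebra_simps)
    then show ?thesis using True by (simp add: m_def r_def)
  next
    case False
    then obtain r' where r': "r = Suc r'" by (cases r) auto
    have "L * D = (L + 1) * (L * m + r') + (L - r')" using D r' \<open>r < L + 1\<close>
      by (simp add: algebra_simps)
    then have "L * D div (L + 1) = L * m + r'"
      by (intro div_nat_eqI) (use r' \<open>r < L + 1\<close> in \<open>simp_all add: algebra_simps\<close>)
    then have "D - L * (D - t) = m + r" using D r' by (simp add: t_def algebra_simps)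
    then show ?thesis using False by (simp add: m_def r_def)
  qed
qed

text \<open>The size \<open>n - L s - 1\<close> of the coordinate set \<open>Z\<close> carrying the zero patterns, as a function
  of \<open>k\<close>, \<open>L\<close> and \<open>D = n - k\<close> (cf. \<open>list_radius_support\<close>).\<close>
definition zero_pattern_length :: "nat \<Rightarrow> nat \<Rightarrow> nat \<Rightarrow> nat" where
  "zero_pattern_length k L D =
     k - 1 + (D div (L + 1) + (if D mod (L + 1) = 0 then L else D mod (L + 1)))"

lemma zero_pattern_length_ge:
  assumes "k \<ge> 1" and "L \<ge> 1"
  shows "k + D div (L + 1) \<le> zero_pattern_length k L D"
  using assms by (auto simp: zero_pattern_length_def)

lemma choose_bound_least:
  assumes "k \<ge> 2" and "L \<ge> 1" and "(L + 1) * (LEAST h. L \<le> (k + h) choose (k - 1)) + k \<le> n"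
  shows "L \<le> zero_pattern_length k L (n - k) choose (k - 1)"
proof -
  define h where "h = (LEAST h. L \<le> (k + h) choose (k - 1))"
  have "k + L \<le> (k + L) choose (k - 1)" using assms(1) by (intro upper_le_binomial) auto
  then have "L \<le> (k + L) choose (k - 1)" by linarith
  then have h: "L \<le> (k + h) choose (k - 1)"
    unfolding h_def by (rule LeastI[where P = "\<lambda>h. L \<le> (k + h) choose (k - 1)"])
  have "(L + 1) * h \<le> n - k" using assms(3) unfolding h_def by linarith
  then have "h \<le> (n - k) div (L + 1)" by (simp add: less_eq_div_iff_mult_less_eq mult.commute)
  then have "k + h \<le> zero_pattern_length k L (n - k)"
    using zero_pattern_length_ge[of k L "n - k"] assms(1,2) by simp
  then have "(k + h) choose (k - 1) \<le> zero_pattern_length k L (n - k) choose (k - 1)"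
    by (rule binomial_right_mono)
  with h show ?thesis by linarith
qed

lemma choose_bound_cases:
  fixes n k L :: nat
  assumes "L \<ge> 1" and "k < n"
    and "k \<ge> L
         \<or> (k \<ge> 2 \<and> n \<ge> (L + 1) * (LEAST h. L \<le> (k + h) choose (k - 1)) + k)
         \<or> (k \<ge> 2 \<and> (n - k) mod (L + 1) \<in> {0, L - 1, L})
         \<or> (k \<ge> 1 \<and> n - k - 1 \<le> L \<and> L \<le> (n - 1) choose (k - 1))"
  defines "z \<equiv> zero_pattern_length k L (n - k)"
  shows "L \<le> z choose (k - 1)"
  using assms(3)
proof (elim disjE)
  assume "k \<ge> L"
  then have "z \<ge> k" using zero_pattern_length_ge[of k L "n - k"] assms(1) by (simp add: z_def)
  show ?thesis
  proof (cases "k = 1")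
    case False
    then have "z \<le> z choose (k - 1)"
      using \<open>z \<ge> k\<close> \<open>k \<ge> L\<close> assms(1) by (intro upper_le_binomial) auto
    then show ?thesis using \<open>z \<ge> k\<close> \<open>k \<ge> L\<close> by linarith
  qed (use \<open>k \<ge> L\<close> in simp)
next
  assume "k \<ge> 2 \<and> n \<ge> (L + 1) * (LEAST h. L \<le> (k + h) choose (k - 1)) + k"
  then show ?thesis using choose_bound_least assms(1) by (simp add: z_def)
next
  assume k: "k \<ge> 2 \<and> (n - k) mod (L + 1) \<in> {0, L - 1, L}"
  then have "L \<le> z" by (auto simp: z_def zero_pattern_length_def)
  moreover have "z \<le> z choose (k - 1)"
    using k assms(1) by (intro upper_le_binomial) (auto simp: z_def zero_pattern_length_def)
  ultimately show ?thesis by linarith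
next
  assume n: "k \<ge> 1 \<and> n - k - 1 \<le> L \<and> L \<le> (n - 1) choose (k - 1)"
  have "z = n - 1"
  proof (cases "n - k \<le> L")
    case True
    then show ?thesis using assms(2) n by (simp add: z_def zero_pattern_length_def)
  next
    case False
    then have "n - k = L + 1" using n by linarith
    then show ?thesis using assms(2) n by (simp add: z_def zero_pattern_length_def)
  qed
  then show ?thesis using n by simp
qed

lemma mds_code_list_decoding_radius:
  fixes C :: "('a::{finite,field} ^ 'n) set"
  assumes mds: "mds_code C k" and "k \<ge> 1" and "k < CARD('n)" and "L \<ge> 1"
    and "L \<le> zero_pattern_length k L (CARD('n) - k) choose (k - 1)"
    and "list_decodable C \<tau> L"
  shows "\<tau> \<le> L * (CARD('n) - k) div (L + 1)"
proof (rule ccontr)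
  define D t where "D = CARD('n) - k" and "t = L * D div (L + 1) + 1"
  assume "\<not> \<tau> \<le> L * (CARD('n) - k) div (L + 1)"
  then have "t \<le> \<tau>" by (simp add: t_def D_def)
  have "D \<ge> 1" using assms(3) by (simp add: D_def)
  note blocks = list_radius_blocks[OF \<open>D \<ge> 1\<close>, of L, folded t_def]
  define s z where "s = D - t" and "z = CARD('n) - L * s - 1"
  have "z = k - 1 + (D - L * s)" using blocks assms(2,3) by (simp add: z_def D_def s_def)
  also have "\<dots> = zero_pattern_length k L D"
    using list_radius_support[OF assms(4) \<open>D \<ge> 1\<close>, folded t_def s_def]
    by (simp add: zero_pattern_length_def)
  finally have "L \<le> z choose (k - 1)" using assms(5) by (simp add: D_def)
  obtain x :: 'n where True by simp
  have "z \<le> card (UNIV - {x})" using card_Diff_singleton[of x UNIV] by (simp add: z_def)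
  then obtain Z where Z: "Z \<subseteq> UNIV - {x}" "card Z = z"
    by (meson obtain_subset_with_card_n)
  have "UNIV - Z - {x} = (UNIV - {x}) - Z" by blast
  then have W: "card (UNIV - Z - {x}) = L * s"
    using Z blocks card_Diff_subset[of Z "UNIV - {x}"] card_Diff_singleton[of x UNIV]
    by (simp add: z_def s_def D_def)
  have "x \<notin> Z" using Z(1) by blast
  have "CARD('n) - k - s \<le> t" using blocks(1) by (simp add: s_def D_def)
  from mds_code_not_list_decodable[OF mds assms(2) \<open>L \<le> z choose (k - 1)\<close>[folded Z(2)]
      \<open>x \<notin> Z\<close> W this blocks(2)[folded s_def]]
  have "\<not> list_decodable C t L" .
  then show False using list_decodable_mono[OF assms(6) \<open>t \<le> \<tau>\<close>] by contradiction
qed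

theorem mainTheorem5:
  fixes C :: "('a::{finite,field} ^ 'n) set" and n k L \<tau> :: nat
  assumes "n = CARD('n)"
    and "L \<ge> 1"
    and "mds_code C k"
    and "k < n"
    and "list_decodable C \<tau> L"
    and "k \<ge> L
         \<or> (k \<ge> 2 \<and> n \<ge> (L + 1) * (LEAST h. L \<le> (k + h) choose (k - 1)) + k)
         \<or> (k \<ge> 2 \<and> (n - k) mod (L + 1) \<in> {0, L - 1, L})
         \<or> (k \<ge> 1 \<and> n - k - 1 \<le> L \<and> L \<le> (n - 1) choose (k - 1))"
  shows "real \<tau> \<le> real L * real (n - k) / real (L + 1)"
proof -
  have "k \<ge> 1" using assms(2,6) by auto
  have "L \<le> zero_pattern_length k L (n - k) choose (k - 1)"
    by (rule choose_bound_cases[OF assms(2,4,6)])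
  then have "\<tau> \<le> L * (n - k) div (L + 1)"
    using mds_code_list_decoding_radius[OF assms(3) \<open>k \<ge> 1\<close> _ assms(2) _ assms(5)] assms(1,4)
    by simp
  also have "real (L * (n - k) div (L + 1)) \<le> real (L * (n - k)) / real (L + 1)"
    by (rule of_nat_div_le_of_nat)
  finally show ?thesis by simp
qed

end
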